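(* Let $p>1$. For any feasible $\mathbf b$-flow $\mathbf f$, we have $\mathcal E(\mathbf f)\ge\frac1p\left(\frac{\|\mathbf b\|_\infty}n\right)^p\|\mathbf r\|_{-\infty}$.
   Context: $G=(V,E)$ is a simple undirected graph with $n$ vertices, weights $r(e)>0$, and fixed orientation $\vec E$ (with $f(j,i)=-f(i,j)$). $\mathbf b\in\mathbb R^V$ with $\sum_ib(i)=0$; a $\mathbf b$-flow has net outflow $b(i)$ at every vertex $i$. $\mathcal E(\mathbf f)=\frac1p\sum_{e\in\vec E}r(e)|f(e)|^p$. For a vector $\mathbf v$, $\|\mathbf v\|_\infty=\max_i|v(i)|$ and $\|\mathbf v\|_{-\infty}=\min_i|v(i)|$. *)

theory Defs
  imports Complex_Main
begin

text \<open>A simple undirected graph on the finite vertex set V, given by a fixed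
orientation: E is the set of oriented edges (i,j); each undirected edge appears
in exactly one direction, and there are no loops.\<close>
definition oriented_simple_graph :: "'a set \<Rightarrow> ('a \<times> 'a) set \<Rightarrow> bool" where
  "oriented_simple_graph V E \<longleftrightarrow> finite V \<and> E \<subseteq> V \<times> V \<and>
     (\<forall>i. (i, i) \<notin> E) \<and> (\<forall>i j. (i, j) \<in> E \<longrightarrow> (j, i) \<notin> E)"

text \<open>Net outflow of f at vertex i (f(j,i) = - f(i,j) for the reverse direction).\<close>
definition net_outflow :: "('a \<times> 'a) set \<Rightarrow> ('a \<times> 'a \<Rightarrow> real) \<Rightarrow> 'a \<Rightarrow> real" where
  "net_outflow E f i = (\<Sum>e\<in>{e\<in>E. fst e = i}. f e) - (\<Sum>e\<in>{e\<in>E. snd e = i}. f e)"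

definition is_b_flow :: "'a set \<Rightarrow> ('a \<times> 'a) set \<Rightarrow> ('a \<Rightarrow> real) \<Rightarrow> ('a \<times> 'a \<Rightarrow> real) \<Rightarrow> bool" where
  "is_b_flow V E b f \<longleftrightarrow> (\<forall>i\<in>V. net_outflow E f i = b i)"

definition energy :: "real \<Rightarrow> ('a \<times> 'a) set \<Rightarrow> ('a \<times> 'a \<Rightarrow> real) \<Rightarrow> ('a \<times> 'a \<Rightarrow> real) \<Rightarrow> real" where
  "energy p E r f = (1 / p) * (\<Sum>e\<in>E. r e * \<bar>f e\<bar> powr p)"

definition inf_norm :: "'b set \<Rightarrow> ('b \<Rightarrow> real) \<Rightarrow> real" where
  "inf_norm I v = Max ((\<lambda>i. \<bar>v i\<bar>) ` I)"

definition neg_inf_norm :: "'b set \<Rightarrow> ('b \<Rightarrow> real) \<Rightarrow> real" where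
  "neg_inf_norm I v = Min ((\<lambda>i. \<bar>v i\<bar>) ` I)"

end

theory Submission
  imports Defs
begin

(* Take a vertex i where |b i| is maximal. Conservation at i bounds |b i| by the total
   flow on the edges at i; in a simple graph there are fewer than n of them, so one edge e
   carries |f e| \<ge> |b i| / n, and that edge alone contributes r e |f e|^p / p to the energy. *)

definition incident_edges :: "('a \<times> 'a) set \<Rightarrow> 'a \<Rightarrow> ('a \<times> 'a) set" where
  "incident_edges E i = {e \<in> E. fst e = i \<or> snd e = i}"

lemma oriented_simple_graph_finite_edges:
  "oriented_simple_graph V E \<Longrightarrow> finite E"
  unfolding oriented_simple_graph_def by (metis finite_SigmaI finite_subset)

lemma card_incident_edges_less:
  assumes G: "oriented_simple_graph V E" and "i \<in> V"
  shows "card (incident_edges E i) < card V"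
proof -
  define other_end where "other_end e = (if fst e = i then snd e else fst e)" for e :: "'a \<times> 'a"
  have no_loop: "(j, j) \<notin> E" and antisym: "(j, k) \<in> E \<Longrightarrow> (k, j) \<notin> E"
    and edges_in_V: "(j, k) \<in> E \<Longrightarrow> j \<in> V \<and> k \<in> V" for j k
    using G unfolding oriented_simple_graph_def by auto
  have "inj_on other_end (incident_edges E i)"
  proof (rule inj_onI)
    fix x y
    assume "x \<in> incident_edges E i" "y \<in> incident_edges E i" "other_end x = other_end y"
    then show "x = y"
      using no_loop antisym unfolding incident_edges_def other_end_def
      by (cases x, cases y) (auto split: if_splits)
  qed
  moreover have "other_end ` incident_edges E i \<subseteq> V - {i}"
    using no_loop edges_in_V unfolding incident_edges_def other_end_def by auto
  moreover have "finite V"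
    using G unfolding oriented_simple_graph_def by simp
  ultimately have "card (incident_edges E i) \<le> card (V - {i})"
    by (metis card_inj_on_le finite_Diff)
  also have "\<dots> < card V"
    using \<open>finite V\<close> \<open>i \<in> V\<close> by (rule card_Diff1_less)
  finally show ?thesis .
qed

lemma abs_net_outflow_le_incident:
  assumes "finite E" and "\<And>j. (j, j) \<notin> E"
  shows "\<bar>net_outflow E f i\<bar> \<le> (\<Sum>e\<in>incident_edges E i. \<bar>f e\<bar>)"
proof -
  define Out In where "Out = {e \<in> E. fst e = i}" and "In = {e \<in> E. snd e = i}"
  have "Out \<inter> In = {}"
    unfolding Out_def In_def using assms(2) by (auto simp: prod_eq_iff)
  have "\<bar>net_outflow E f i\<bar> \<le> \<bar>sum f Out\<bar> + \<bar>sum f In\<bar>"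
    unfolding net_outflow_def Out_def In_def by linarith
  also have "\<dots> \<le> (\<Sum>e\<in>Out. \<bar>f e\<bar>) + (\<Sum>e\<in>In. \<bar>f e\<bar>)"
    by (intro add_mono sum_abs)
  also have "\<dots> = (\<Sum>e\<in>Out \<union> In. \<bar>f e\<bar>)"
    using \<open>finite E\<close> \<open>Out \<inter> In = {}\<close> unfolding Out_def In_def
    by (intro sum.union_disjoint[symmetric]) auto
  also have "Out \<union> In = incident_edges E i"
    unfolding Out_def In_def incident_edges_def by auto
  finally show ?thesis .
qed

lemma exists_ge_sum_div_card:
  fixes g :: "'b \<Rightarrow> 'c::linordered_field"
  assumes "finite A" and "A \<noteq> {}"
  obtains x where "x \<in> A" and "sum g A / of_nat (card A) \<le> g x"
proof -
  have "\<exists>x\<in>A. sum g A / of_nat (card A) \<le> g x"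
  proof (rule ccontr)
    assume "\<not> ?thesis"
    then have "g x < sum g A / of_nat (card A)" if "x \<in> A" for x
      using that by force
    then have "sum g A < of_nat (card A) * (sum g A / of_nat (card A))"
      using assms by (intro sum_bounded_above_strict) (auto simp: card_gt_0_iff)
    then show False
      using assms by simp
  qed
  then show thesis
    using that by blast
qed

lemma exists_edge_flow_ge_net_outflow_div_card:
  assumes G: "oriented_simple_graph V E" and "i \<in> V" and "net_outflow E f i \<noteq> 0"
  obtains e where "e \<in> E" and "\<bar>net_outflow E f i\<bar> / card V \<le> \<bar>f e\<bar>"
proof -
  let ?I = "incident_edges E i"
  have "finite E"
    using G by (rule oriented_simple_graph_finite_edges)
  then have "finite ?I"
    unfolding incident_edges_def by simp
  have bound: "\<bar>net_outflow E f i\<bar> \<le> (\<Sum>e\<in>?I. \<bar>f e\<bar>)"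
    using \<open>finite E\<close> G by (intro abs_net_outflow_le_incident) (auto simp: oriented_simple_graph_def)
  then have "?I \<noteq> {}"
    using assms(3) by auto
  then obtain e where "e \<in> ?I" and e: "(\<Sum>e\<in>?I. \<bar>f e\<bar>) / card ?I \<le> \<bar>f e\<bar>"
    using \<open>finite ?I\<close> exists_ge_sum_div_card by blast
  have "0 < card ?I"
    using \<open>finite ?I\<close> \<open>?I \<noteq> {}\<close> by (simp add: card_gt_0_iff)
  moreover have "card ?I < card V"
    using G \<open>i \<in> V\<close> by (rule card_incident_edges_less)
  ultimately have "\<bar>net_outflow E f i\<bar> / card V \<le> (\<Sum>e\<in>?I. \<bar>f e\<bar>) / card ?I"
    using bound by (intro frac_le) auto
  with e \<open>e \<in> ?I\<close> show thesis
    by (intro that[of e]) (auto simp: incident_edges_def)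
qed

lemma inf_norm_attained:
  assumes "finite I" and "I \<noteq> {}"
  obtains i where "i \<in> I" and "inf_norm I v = \<bar>v i\<bar>"
proof -
  have "Max ((\<lambda>i. \<bar>v i\<bar>) ` I) \<in> (\<lambda>i. \<bar>v i\<bar>) ` I"
    using assms by (intro Max_in) auto
  then show thesis
    using that unfolding inf_norm_def by auto
qed

lemma neg_inf_norm_le:
  "finite I \<Longrightarrow> i \<in> I \<Longrightarrow> neg_inf_norm I v \<le> \<bar>v i\<bar>"
  unfolding neg_inf_norm_def by simp

lemma neg_inf_norm_nonneg:
  "finite I \<Longrightarrow> I \<noteq> {} \<Longrightarrow> 0 \<le> neg_inf_norm I v"
  unfolding neg_inf_norm_def by simp

lemma energy_nonneg:
  "p > 0 \<Longrightarrow> \<forall>e\<in>E. r e \<ge> 0 \<Longrightarrow> 0 \<le> energy p E r f"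
  unfolding energy_def by (simp add: sum_nonneg)

lemma energy_ge_edge:
  assumes "finite E" and "e \<in> E" and "p > 0" and "\<forall>e\<in>E. r e \<ge> 0"
  shows "(1 / p) * (r e * \<bar>f e\<bar> powr p) \<le> energy p E r f"
  unfolding energy_def using assms
  by (intro mult_left_mono member_le_sum) auto

theorem mainTheorem19:
  fixes V :: "'a set" and E :: "('a \<times> 'a) set" and r f :: "'a \<times> 'a \<Rightarrow> real"
    and b :: "'a \<Rightarrow> real" and p :: real
  assumes "oriented_simple_graph V E"
    and "\<forall>e\<in>E. r e > 0"
    and "(\<Sum>i\<in>V. b i) = 0"
    and "p > 1"
    and "is_b_flow V E b f"
  shows "energy p E r f \<ge>
           (1 / p) * (inf_norm V b / real (card V)) powr p * neg_inf_norm E r"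
proof (cases "V = {} \<or> inf_norm V b = 0")
  case True
  moreover have "0 \<le> energy p E r f"
    using assms(2,4) by (intro energy_nonneg) auto
  ultimately show ?thesis
    by auto
next
  case False
  have "finite V" "finite E"
    using assms(1) oriented_simple_graph_finite_edges by (auto simp: oriented_simple_graph_def)
  then obtain i where "i \<in> V" and i: "inf_norm V b = \<bar>b i\<bar>"
    using False inf_norm_attained by metis
  then have "net_outflow E f i = b i" "b i \<noteq> 0"
    using assms(5) False unfolding is_b_flow_def by auto
  then obtain e where "e \<in> E" and e: "\<bar>b i\<bar> / card V \<le> \<bar>f e\<bar>"
    using exists_edge_flow_ge_net_outflow_div_card[OF assms(1) \<open>i \<in> V\<close>] by metis
  have "neg_inf_norm E r \<le> r e" "0 \<le> neg_inf_norm E r"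
    using neg_inf_norm_le[OF \<open>finite E\<close> \<open>e \<in> E\<close>, of r] assms(2) \<open>e \<in> E\<close>
      neg_inf_norm_nonneg[OF \<open>finite E\<close>] by auto
  then have "(1 / p) * (inf_norm V b / card V) powr p * neg_inf_norm E r
        \<le> (1 / p) * (\<bar>f e\<bar> powr p * r e)"
    unfolding i mult.assoc using assms(4) e
    by (intro mult_left_mono mult_mono powr_mono2) auto
  also have "\<dots> = (1 / p) * (r e * \<bar>f e\<bar> powr p)"
    by (simp add: mult.commute)
  also have "\<dots> \<le> energy p E r f"
    using assms(2,4) \<open>finite E\<close> \<open>e \<in> E\<close> by (intro energy_ge_edge) auto
  finally show ?thesis .
qed

end
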